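(* Let $(M,\Sigma_M,\mu,T_t)$ be a measure-preserving deterministic system. Then the following two conditions are equivalent: (a) there do not exist $n\in\mathbb{R}^{+}$ and $C\in\Sigma_M$ with $0<\mu(C)<1$ such that $T_n(C)=C$ except for a set of $\mu$-measure zero; (b) for every nontrivial finite-valued observation function $\Phi:M\to M_O$ and every $k\in\mathbb{R}^{+}$, the stochastic process $\{Z_t;\,t\in\mathbb{R}\}:=\{\Phi\circ T_t;\,t\in\mathbb{R}\}$ (random variables on $(M,\Sigma_M,\mu)$) has values $o_i,o_j\in M_O$ with $$0<P\{Z_{t+k}=o_j\mid Z_t=o_i\}<1 .$$
   Context: A (continuous-time) deterministic system is a quadruple $(M,\Sigma_M,\mu,T_t)$ where $(M,\Sigma_M,\mu)$ is a probability space and $T_t:M\to M$, $t\in\mathbb{R}$, are measurable maps with $T_{t_1+t_2}(m)=T_{t_2}(T_{t_1}(m))$ for all $m\in M$ and $t_1,t_2\in\mathbb{R}$, and with $(t,m)\mapsto T_t(m)$ jointly measurable. It is measure-preserving if $\mu(T_t(A))=\mu(A)$ for all $A\in\Sigma_M$ and all $t\in\mathbb{R}$. An observation function is a measurable map $\Phi:M\to M_O$ into a measurable space. It is finite-valued if it takes only finitely many values $o_1,\dots,o_r$ and $\mu(\{m:\Phi(m)=o_i\})>0$ for each $i$; it is nontrivial if $r\ge 2$. Here $P\{Z_{t+k}=o_j\mid Z_t=o_i\}=\mu(\{m:\Phi(T_{t+k}m)=o_j,\ \Phi(T_t m)=o_i\})/\mu(\{m:\Phi(T_t m)=o_i\})$.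 *)

theory Defs
  imports "HOL-Probability.Probability"
begin

definition det_system :: "'a measure \<Rightarrow> (real \<Rightarrow> 'a \<Rightarrow> 'a) \<Rightarrow> bool" where
  "det_system M T \<longleftrightarrow>
     prob_space M \<and>
     (\<forall>t. T t \<in> M \<rightarrow>\<^sub>M M) \<and>
     (\<forall>t1 t2. \<forall>m\<in>space M. T (t1 + t2) m = T t2 (T t1 m)) \<and>
     (\<lambda>(t, m). T t m) \<in> borel \<Otimes>\<^sub>M M \<rightarrow>\<^sub>M M"

definition measure_preserving_system :: "'a measure \<Rightarrow> (real \<Rightarrow> 'a \<Rightarrow> 'a) \<Rightarrow> bool" where
  "measure_preserving_system M T \<longleftrightarrow>
     det_system M T \<and>
     (\<forall>A\<in>sets M. \<forall>t. T t ` A \<in> sets M \<and> emeasure M (T t ` A) = emeasure M A)"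

definition finite_valued_obs :: "'a measure \<Rightarrow> 'b measure \<Rightarrow> ('a \<Rightarrow> 'b) \<Rightarrow> bool" where
  "finite_valued_obs M MO \<Phi> \<longleftrightarrow>
     \<Phi> \<in> M \<rightarrow>\<^sub>M MO \<and> finite (\<Phi> ` space M) \<and>
     (\<forall>v\<in>\<Phi> ` space M. {m\<in>space M. \<Phi> m = v} \<in> sets M \<and>
                         measure M {m\<in>space M. \<Phi> m = v} > 0)"

definition nontrivial_obs :: "'a measure \<Rightarrow> 'b measure \<Rightarrow> ('a \<Rightarrow> 'b) \<Rightarrow> bool" where
  "nontrivial_obs M MO \<Phi> \<longleftrightarrow> finite_valued_obs M MO \<Phi> \<and> card (\<Phi> ` space M) \<ge> 2"

definition trans_prob ::
  "'a measure \<Rightarrow> (real \<Rightarrow> 'a \<Rightarrow> 'a) \<Rightarrow> ('a \<Rightarrow> 'b) \<Rightarrow> real \<Rightarrow> real \<Rightarrow> 'b \<Rightarrow> 'b \<Rightarrow> real" where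
  "trans_prob M T \<Phi> t k oi oj =
     measure M {m\<in>space M. \<Phi> (T (t + k) m) = oj \<and> \<Phi> (T t m) = oi}
     / measure M {m\<in>space M. \<Phi> (T t m) = oi}"

end

theory Submission
  imports Defs
begin

text \<open>Measure preservation makes the transition probabilities of \<open>\<Phi> \<circ> T\<^sub>t\<close> independent of
  \<open>t\<close>: with \<open>A\<^sub>i\<close> the level sets of \<open>\<Phi>\<close>, they equal \<open>\<mu>(A\<^sub>i \<inter> T\<^sub>k\<^sup>-\<^sup>1 A\<^sub>j) / \<mu>(A\<^sub>i)\<close>.
  If \<open>C\<close> is almost invariant under \<open>T\<^sub>n\<close>, the indicator of \<open>C\<close> only has transition
  probabilities 0 and 1 over time \<open>n\<close>. Conversely, if all transition probabilities over time \<open>k\<close>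
  of some \<open>\<Phi>\<close> are 0 or 1, then, since each row sums to 1, every level set is carried by \<open>T\<^sub>k\<close>
  almost entirely into a single level set. This defines a self-map of the finitely many values,
  which has a periodic point \<open>i = \<sigma>\<^sup>p i\<close>; the level set \<open>A\<^sub>i\<close> is then almost invariant
  under \<open>T\<^sub>p\<^sub>k\<close>, and it has measure strictly between 0 and 1 because \<open>\<Phi>\<close> is nontrivial.\<close>

lemma finite_funpow_periodic_point:
  assumes "finite V" and "i \<in> V" and "\<forall>x\<in>V. \<sigma> x \<in> V"
  shows "\<exists>j\<in>V. \<exists>p. (\<sigma> ^^ Suc p) j = j"
proof -
  define f where "f a = (\<sigma> ^^ a) i" for a
  have f_in: "f a \<in> V" for a
    unfolding f_def by (induction a) (use assms in auto)
  then have "range f \<subseteq> V"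
    by blast
  then have "finite (range f)"
    using assms(1) by (rule finite_subset)
  have "\<not> inj f"
  proof
    assume "inj f"
    with \<open>finite (range f)\<close> have "finite (UNIV :: nat set)"
      by (rule finite_imageD)
    then show False
      by simp
  qed
  then obtain a b where "a < b" "f a = f b"
    unfolding inj_def by (metis linorder_neq_iff)
  define d where "d = b - a - 1"
  have "b = Suc (d + a)"
    using \<open>a < b\<close> by (simp add: d_def)
  then have "(\<sigma> ^^ Suc d) (f a) = f a"
    using \<open>f a = f b\<close> by (simp add: f_def funpow_add)
  then show ?thesis
    using f_in by blast
qed

lemma (in finite_measure) measure_Diff_null_swap:
  assumes "A \<in> sets M" "B \<in> sets M" "measure M B \<le> measure M A" "measure M (A - B) = 0"
  shows "measure M (B - A) = 0"
  using finite_measure_Diff'[OF assms(1,2)] finite_measure_Diff'[OF assms(2,1)] assms(3,4)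
    measure_nonneg[of M "B - A"] by (simp add: Int_commute)

definition level_set :: "'a measure \<Rightarrow> ('a \<Rightarrow> 'b) \<Rightarrow> 'b \<Rightarrow> 'a set" where
  "level_set M \<Phi> v = {m\<in>space M. \<Phi> m = v}"

lemma sets_level_set:
  assumes "finite_valued_obs M MO \<Phi>"
  shows "level_set M \<Phi> v \<in> sets M"
proof (cases "v \<in> \<Phi> ` space M")
  case False
  then have "level_set M \<Phi> v = {}"
    by (auto simp: level_set_def)
  then show ?thesis by simp
qed (use assms in \<open>auto simp: finite_valued_obs_def level_set_def\<close>)

lemma (in prob_space) measure_level_set_less_1:
  assumes "nontrivial_obs M MO \<Phi>" and "i \<in> \<Phi> ` space M"
  shows "measure M (level_set M \<Phi> i) < 1"
proof -
  have "\<not> \<Phi> ` space M \<subseteq> {i}"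
    using assms(1) card_mono[of "{i}" "\<Phi> ` space M"] by (auto simp: nontrivial_obs_def)
  then obtain j where j: "j \<in> \<Phi> ` space M" "j \<noteq> i"
    by blast
  have fvo: "finite_valued_obs M MO \<Phi>"
    using assms(1) by (simp add: nontrivial_obs_def)
  have "measure M (level_set M \<Phi> j) \<le> measure M (space M - level_set M \<Phi> i)"
    using j(2) by (intro finite_measure_mono sets.compl_sets sets_level_set[OF fvo])
      (auto simp: level_set_def)
  also have "\<dots> = 1 - measure M (level_set M \<Phi> i)"
    using prob_compl[OF sets_level_set[OF fvo]] .
  finally have "measure M (level_set M \<Phi> j) \<le> 1 - measure M (level_set M \<Phi> i)" .
  moreover have "measure M (level_set M \<Phi> j) > 0"
    using fvo j(1) by (auto simp: finite_valued_obs_def level_set_def)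
  ultimately show ?thesis by simp
qed

lemma (in prob_space) nontrivial_obs_indicator:
  fixes x y :: 'b
  assumes "x \<noteq> y" and "C \<in> sets M" "0 < measure M C" "measure M C < 1"
  defines "\<Phi> \<equiv> \<lambda>m. if m \<in> C then x else y"
  shows "nontrivial_obs M (count_space UNIV) \<Phi>" and "\<Phi> ` space M = {x, y}"
    and "level_set M \<Phi> x = C" and "level_set M \<Phi> y = space M - C"
proof -
  have C_space: "C \<subseteq> space M"
    using assms(2) sets.sets_into_space by blast
  have "space M - C \<noteq> {}"
  proof
    assume "space M - C = {}"
    then have "C = space M"
      using C_space by blast
    then show False
      using assms(4) prob_space by simp
  qed
  moreover have "C \<noteq> {}"
    using assms(3) by auto
  ultimately show img: "\<Phi> ` space M = {x, y}"
    using C_space by (auto simp: \<Phi>_def)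
  show lx: "level_set M \<Phi> x = C" and ly: "level_set M \<Phi> y = space M - C"
    using C_space assms(1) by (auto simp: \<Phi>_def level_set_def)
  have "\<Phi> \<in> M \<rightarrow>\<^sub>M count_space UNIV"
    unfolding \<Phi>_def by (rule measurable_If_set) (use assms(2) C_space in \<open>auto simp: Int_absorb2\<close>)
  moreover have "measure M (space M - C) > 0"
    using prob_compl[OF assms(2)] assms(4) by simp
  ultimately show "nontrivial_obs M (count_space UNIV) \<Phi>"
    using img lx ly assms(1-3)
    by (auto simp: nontrivial_obs_def finite_valued_obs_def level_set_def[symmetric])
qed

locale measure_preserving_flow =
  fixes M :: "'a measure" and T :: "real \<Rightarrow> 'a \<Rightarrow> 'a"
  assumes measure_preserving: "measure_preserving_system M T"
begin

sublocale prob_space M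
  using measure_preserving by (simp add: measure_preserving_system_def det_system_def)

lemma flow_measurable: "T t \<in> M \<rightarrow>\<^sub>M M"
  using measure_preserving by (simp add: measure_preserving_system_def det_system_def)

lemma flow_add: "m \<in> space M \<Longrightarrow> T (s + t) m = T t (T s m)"
  using measure_preserving by (simp add: measure_preserving_system_def det_system_def)

lemma flow_in_space: "m \<in> space M \<Longrightarrow> T t m \<in> space M"
  by (rule measurable_space[OF flow_measurable])

lemma sets_flow_image: "A \<in> sets M \<Longrightarrow> T t ` A \<in> sets M"
  using measure_preserving by (simp add: measure_preserving_system_def)

lemma measure_flow_image: "A \<in> sets M \<Longrightarrow> measure M (T t ` A) = measure M A"
  using measure_preserving by (simp add: measure_preserving_system_def measure_def)

definition flow_vimage :: "real \<Rightarrow> 'a set \<Rightarrow> 'a set" where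
  "flow_vimage t B = T t -` B \<inter> space M"

lemma sets_flow_vimage: "B \<in> sets M \<Longrightarrow> flow_vimage t B \<in> sets M"
  unfolding flow_vimage_def by (rule measurable_sets[OF flow_measurable])

lemma flow_vimage_compl: "flow_vimage t (space M - B) = space M - flow_vimage t B"
  by (auto simp: flow_vimage_def flow_in_space)

text \<open>Measure preservation is assumed for images; for preimages it follows by complementation,
  since \<open>T\<^sub>t (T\<^sub>t\<^sup>-\<^sup>1 C) \<subseteq> C\<close> gives one inequality for every measurable \<open>C\<close>.\<close>
lemma measure_flow_vimage:
  assumes "B \<in> sets M"
  shows "measure M (flow_vimage t B) = measure M B"
proof -
  have le: "measure M (flow_vimage t C) \<le> measure M C" if "C \<in> sets M" for C
  proof -
    have "measure M (flow_vimage t C) = measure M (T t ` flow_vimage t C)"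
      using measure_flow_image sets_flow_vimage that by simp
    also have "\<dots> \<le> measure M C"
      using that by (intro finite_measure_mono) (auto simp: flow_vimage_def)
    finally show ?thesis .
  qed
  have "1 - measure M (flow_vimage t B) \<le> 1 - measure M B"
    using le[of "space M - B"] assms
    by (simp add: flow_vimage_compl prob_compl sets_flow_vimage)
  with le[OF assms] show ?thesis by simp
qed

lemma measure_Diff_flow_vimage_add:
  assumes "X \<in> sets M" "Y \<in> sets M" "Z \<in> sets M"
    and "measure M (X - flow_vimage s Y) = 0" "measure M (Y - flow_vimage t Z) = 0"
  shows "measure M (X - flow_vimage (s + t) Z) = 0"
proof -
  have YZ: "Y - flow_vimage t Z \<in> sets M"
    by (intro sets.Diff sets_flow_vimage assms)
  have XY: "X - flow_vimage s Y \<in> sets M"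
    by (intro sets.Diff sets_flow_vimage assms)
  have "X - flow_vimage (s + t) Z \<subseteq> (X - flow_vimage s Y) \<union> flow_vimage s (Y - flow_vimage t Z)"
    by (auto simp: flow_vimage_def flow_add)
  then have "measure M (X - flow_vimage (s + t) Z)
      \<le> measure M ((X - flow_vimage s Y) \<union> flow_vimage s (Y - flow_vimage t Z))"
    by (intro finite_measure_mono sets.Un XY sets_flow_vimage YZ)
  also have "\<dots> \<le> measure M (X - flow_vimage s Y) + measure M (flow_vimage s (Y - flow_vimage t Z))"
    by (intro measure_Un_le XY sets_flow_vimage YZ)
  also have "\<dots> = 0"
    using assms(4,5) measure_flow_vimage[OF YZ] by simp
  finally show ?thesis
    by (simp add: measure_le_0_iff)
qed

lemma measure_Diff_flow_vimage_funpow: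
  assumes "\<forall>i. A i \<in> sets M" "\<forall>i\<in>V. \<sigma> i \<in> V \<and> measure M (A i - flow_vimage k (A (\<sigma> i))) = 0"
    and "i \<in> V"
  shows "measure M (A i - flow_vimage (real (Suc p) * k) (A ((\<sigma> ^^ Suc p) i))) = 0"
  using assms(3)
proof (induction p arbitrary: i)
  case 0
  then show ?case using assms(2) by simp
next
  case (Suc p)
  have "measure M (A i - flow_vimage (k + real (Suc p) * k) (A ((\<sigma> ^^ Suc p) (\<sigma> i)))) = 0"
    by (rule measure_Diff_flow_vimage_add[of "A i" "A (\<sigma> i)"]) (use Suc assms in auto)
  moreover have "k + real (Suc p) * k = real (Suc (Suc p)) * k"
    by (simp add: algebra_simps)
  moreover have "(\<sigma> ^^ Suc p) (\<sigma> i) = (\<sigma> ^^ Suc (Suc p)) i"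
    by (simp only: funpow_Suc_right comp_apply)
  ultimately show ?case
    by simp
qed

lemma null_sym_diff_flow_image_iff:
  assumes C: "C \<in> sets M"
  shows "sym_diff (T n ` C) C \<in> null_sets M \<longleftrightarrow> measure M (C - flow_vimage n C) = 0"
proof
  have TC: "T n ` C \<in> sets M"
    using sets_flow_image[OF C] .
  assume "sym_diff (T n ` C) C \<in> null_sets M"
  then have "T n ` C - C \<in> null_sets M"
    by (rule null_sets_subset) (use TC C in auto)
  then have "measure M (flow_vimage n (T n ` C - C)) = 0"
    using measure_flow_vimage[of "T n ` C - C" n] TC C by (auto simp: emeasure_eq_measure)
  moreover have "C - flow_vimage n C \<subseteq> flow_vimage n (T n ` C - C)"
    using C sets.sets_into_space by (auto simp: flow_vimage_def)
  moreover have "flow_vimage n (T n ` C - C) \<in> sets M"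
    by (intro sets_flow_vimage sets.Diff TC C)
  ultimately have "measure M (C - flow_vimage n C) \<le> 0"
    using finite_measure_mono[of "C - flow_vimage n C" "flow_vimage n (T n ` C - C)"] by simp
  then show "measure M (C - flow_vimage n C) = 0"
    by (simp add: measure_le_0_iff)
next
  assume null: "measure M (C - flow_vimage n C) = 0"
  define D where "D = C \<inter> flow_vimage n C"
  have D: "D \<in> sets M" "measure M D = measure M C"
    using finite_measure_Diff'[OF C sets_flow_vimage[OF C]] null
    by (auto simp: D_def sets_flow_vimage C)
  have TC: "T n ` C \<in> sets M"
    using sets_flow_image[OF C] .
  have "measure M (T n ` D) \<le> measure M (C \<inter> T n ` C)"
    using TC C by (intro finite_measure_mono) (auto simp: D_def flow_vimage_def)
  then have "measure M C \<le> measure M (C \<inter> T n ` C)"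
    using measure_flow_image[OF D(1)] D(2) by simp
  then have CT: "measure M (C - T n ` C) = 0"
    using finite_measure_Diff'[OF C TC] finite_measure_mono[of "C \<inter> T n ` C" C] C by simp
  have TCC: "measure M (T n ` C - C) = 0"
    using measure_Diff_null_swap[OF C TC _ CT] measure_flow_image[OF C] by simp
  show "sym_diff (T n ` C) C \<in> null_sets M"
    using CT TCC TC C by (intro null_sets.Un null_setsI) (auto simp: emeasure_eq_measure)
qed

lemma trans_prob_eq_level_sets:
  assumes "finite_valued_obs M MO \<Phi>"
  shows "trans_prob M T \<Phi> t k i j =
    measure M (level_set M \<Phi> i \<inter> flow_vimage k (level_set M \<Phi> j)) / measure M (level_set M \<Phi> i)"
proof -
  have "{m\<in>space M. \<Phi> (T (t + k) m) = j \<and> \<Phi> (T t m) = i}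
      = flow_vimage t (level_set M \<Phi> i \<inter> flow_vimage k (level_set M \<Phi> j))"
    by (auto simp: flow_vimage_def level_set_def flow_add flow_in_space)
  moreover have "{m\<in>space M. \<Phi> (T t m) = i} = flow_vimage t (level_set M \<Phi> i)"
    by (auto simp: flow_vimage_def level_set_def flow_in_space)
  ultimately show ?thesis
    unfolding trans_prob_def
    by (simp add: measure_flow_vimage sets_flow_vimage sets_level_set[OF assms] sets.Int)
qed

lemma trans_prob_nonneg: "0 \<le> trans_prob M T \<Phi> t k i j"
  by (simp add: trans_prob_def)

lemma trans_prob_le_1:
  assumes "finite_valued_obs M MO \<Phi>"
  shows "trans_prob M T \<Phi> t k i j \<le> 1"
proof -
  have "measure M (level_set M \<Phi> i \<inter> flow_vimage k (level_set M \<Phi> j)) \<le> measure M (level_set M \<Phi> i)"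
    by (intro finite_measure_mono) (auto simp: sets_level_set[OF assms])
  then show ?thesis
    unfolding trans_prob_eq_level_sets[OF assms] by (auto simp: divide_le_eq_1 zero_less_measure_iff)
qed

lemma sum_trans_prob:
  assumes "finite_valued_obs M MO \<Phi>" and "i \<in> \<Phi> ` space M"
  shows "(\<Sum>j\<in>\<Phi> ` space M. trans_prob M T \<Phi> t k i j) = 1"
proof -
  let ?A = "level_set M \<Phi>"
  have "measure M (?A i) = (\<Sum>j\<in>\<Phi> ` space M. measure M (?A i \<inter> flow_vimage k (?A j)))"
    using assms(1)
    by (intro measure_real_sum_image_fn)
       (auto simp: finite_valued_obs_def sets_level_set sets_flow_vimage flow_in_space,
        auto simp: level_set_def flow_vimage_def flow_in_space)
  moreover have "measure M (?A i) > 0"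
    using assms by (auto simp: finite_valued_obs_def level_set_def)
  ultimately show ?thesis
    by (simp add: trans_prob_eq_level_sets[OF assms(1)] flip: sum_divide_distrib)
qed

lemma trans_prob_eq_0:
  assumes "finite_valued_obs M MO \<Phi>"
    and "measure M (level_set M \<Phi> i \<inter> flow_vimage k (level_set M \<Phi> j)) = 0"
  shows "trans_prob M T \<Phi> t k i j = 0"
  using assms by (simp add: trans_prob_eq_level_sets)

lemma trans_prob_eq_1_iff:
  assumes "finite_valued_obs M MO \<Phi>" and "i \<in> \<Phi> ` space M"
  shows "trans_prob M T \<Phi> t k i j = 1
    \<longleftrightarrow> measure M (level_set M \<Phi> i - flow_vimage k (level_set M \<Phi> j)) = 0"
proof -
  have "measure M (level_set M \<Phi> i) > 0"
    using assms by (auto simp: finite_valued_obs_def level_set_def)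
  then show ?thesis
    using finite_measure_Diff'[of "level_set M \<Phi> i" "flow_vimage k (level_set M \<Phi> j)"]
    by (simp add: trans_prob_eq_level_sets[OF assms(1)] sets_level_set[OF assms(1)] sets_flow_vimage)
qed

lemma trans_prob_indicator_almost_invariant:
  fixes x y :: 'b
  assumes "x \<noteq> y" and C: "C \<in> sets M" "0 < measure M C" "measure M C < 1"
    and invariant: "sym_diff (T n ` C) C \<in> null_sets M"
    and "i \<in> {x, y}" "j \<in> {x, y}"
  shows "trans_prob M T (\<lambda>m. if m \<in> C then x else y) t n i j \<in> {0, 1}"
proof -
  let ?\<Phi> = "\<lambda>m. if m \<in> C then x else y"
  note obs = nontrivial_obs_indicator[OF assms(1) C]
  have fvo: "finite_valued_obs M (count_space UNIV) ?\<Phi>"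
    using obs(1) by (simp add: nontrivial_obs_def)
  have into: "measure M (C - flow_vimage n C) = 0"
    using invariant null_sym_diff_flow_image_iff[OF C(1)] by simp
  have "measure M (flow_vimage n C) \<le> measure M C"
    using measure_flow_vimage[OF C(1)] by simp
  then have onto: "measure M (flow_vimage n C - C) = 0"
    using measure_Diff_null_swap[OF C(1) sets_flow_vimage[OF C(1)] _ into] by simp
  have C_space: "C \<subseteq> space M"
    using sets.sets_into_space[OF C(1)] .
  have "C \<inter> flow_vimage n (space M - C) = C - flow_vimage n C"
    and "(space M - C) \<inter> flow_vimage n C = flow_vimage n C - C"
    and "(space M - C) - flow_vimage n (space M - C) = flow_vimage n C - C"
    using C_space by (auto simp: flow_vimage_def flow_in_space)
  note sets_eq = this obs(3,4)
  have in_image: "x \<in> ?\<Phi> ` space M" "y \<in> ?\<Phi> ` space M"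
    using obs(2) by simp_all
  consider "i = x" "j = x" | "i = x" "j = y" | "i = y" "j = x" | "i = y" "j = y"
    using assms(6,7) by blast
  then show ?thesis
  proof cases
    case 1
    then show ?thesis using trans_prob_eq_1_iff[OF fvo in_image(1), of t n x] sets_eq into by simp
  next
    case 2
    then show ?thesis using trans_prob_eq_0[OF fvo, of x n y t] sets_eq into by simp
  next
    case 3
    then show ?thesis using trans_prob_eq_0[OF fvo, of y n x t] sets_eq onto by simp
  next
    case 4
    then show ?thesis using trans_prob_eq_1_iff[OF fvo in_image(2), of t n y] sets_eq onto by simp
  qed
qed

lemma almost_invariant_set_if_degenerate_trans_prob:
  assumes nontrivial: "nontrivial_obs M MO \<Phi>" and "k > 0"
    and degenerate: "\<forall>i\<in>\<Phi> ` space M. \<forall>j\<in>\<Phi> ` space M.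
      \<exists>t. \<not> (0 < trans_prob M T \<Phi> t k i j \<and> trans_prob M T \<Phi> t k i j < 1)"
  shows "\<exists>n>0. \<exists>C\<in>sets M. 0 < measure M C \<and> measure M C < 1 \<and> sym_diff (T n ` C) C \<in> null_sets M"
proof -
  let ?V = "\<Phi> ` space M" and ?A = "level_set M \<Phi>"
  have fvo: "finite_valued_obs M MO \<Phi>"
    using nontrivial by (simp add: nontrivial_obs_def)
  have "\<exists>j\<in>?V. measure M (?A i - flow_vimage k (?A j)) = 0" if i: "i \<in> ?V" for i
  proof -
    have zero_one: "trans_prob M T \<Phi> 0 k i j \<in> {0, 1}" if j: "j \<in> ?V" for j
    proof -
      obtain t where "\<not> (0 < trans_prob M T \<Phi> t k i j \<and> trans_prob M T \<Phi> t k i j < 1)"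
        using degenerate i j by blast
      moreover have "trans_prob M T \<Phi> t k i j = trans_prob M T \<Phi> 0 k i j"
        by (simp add: trans_prob_eq_level_sets[OF fvo])
      ultimately show ?thesis
        using trans_prob_nonneg[of \<Phi> 0 k i j] trans_prob_le_1[OF fvo, of 0 k i j] by auto
    qed
    have "\<exists>j\<in>?V. trans_prob M T \<Phi> 0 k i j = 1"
    proof (rule ccontr)
      assume "\<not> ?thesis"
      then have "(\<Sum>j\<in>?V. trans_prob M T \<Phi> 0 k i j) = 0"
        using zero_one by (intro sum.neutral) blast
      then show False
        using sum_trans_prob[OF fvo i] by simp
    qed
    then show ?thesis
      using trans_prob_eq_1_iff[OF fvo i] by blast
  qed
  then obtain \<sigma> where \<sigma>: "\<forall>i\<in>?V. \<sigma> i \<in> ?V \<and> measure M (?A i - flow_vimage k (?A (\<sigma> i))) = 0"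
    by metis
  have "?V \<noteq> {}" "finite ?V"
    using nontrivial by (auto simp: nontrivial_obs_def finite_valued_obs_def)
  then obtain i p where i: "i \<in> ?V" and periodic: "(\<sigma> ^^ Suc p) i = i"
    using finite_funpow_periodic_point[of ?V _ \<sigma>] \<sigma> by blast
  define n where "n = real (Suc p) * k"
  have "measure M (?A i - flow_vimage n (?A i)) = 0"
    using measure_Diff_flow_vimage_funpow[of ?A ?V \<sigma> k i p] \<sigma> i periodic sets_level_set[OF fvo]
    by (simp add: n_def)
  then have "sym_diff (T n ` ?A i) (?A i) \<in> null_sets M"
    using null_sym_diff_flow_image_iff[OF sets_level_set[OF fvo]] by blast
  moreover have "0 < measure M (?A i)"
    using fvo i by (auto simp: finite_valued_obs_def level_set_def)
  moreover have "n > 0"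
    using \<open>k > 0\<close> by (simp add: n_def)
  ultimately show ?thesis
    using sets_level_set[OF fvo] measure_level_set_less_1[OF nontrivial i] by blast
qed

end

theorem theorem1:
  fixes M :: "'a measure" and T :: "real \<Rightarrow> 'a \<Rightarrow> 'a"
  assumes "measure_preserving_system M T"
    and "\<exists>x y :: 'b. x \<noteq> y"
  shows "(\<not> (\<exists>n>0. \<exists>C\<in>sets M. 0 < measure M C \<and> measure M C < 1 \<and>
                 (T n ` C - C) \<union> (C - T n ` C) \<in> null_sets M))
     \<longleftrightarrow>
     (\<forall>(MO :: 'b measure) \<Phi>. nontrivial_obs M MO \<Phi> \<longrightarrow>
        (\<forall>k>0. \<exists>oi\<in>\<Phi> ` space M. \<exists>oj\<in>\<Phi> ` space M.
           \<forall>t. 0 < trans_prob M T \<Phi> t k oi oj \<and> trans_prob M T \<Phi> t k oi oj < 1))"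
proof -
  interpret measure_preserving_flow M T
    by (rule measure_preserving_flow.intro) (rule assms(1))
  obtain x y :: 'b where xy: "x \<noteq> y"
    using assms(2) by blast
  show ?thesis
  proof (intro iffI allI impI notI)
    fix MO :: "'b measure" and \<Phi> :: "'a \<Rightarrow> 'b" and k :: real
    assume "\<not> (\<exists>n>0. \<exists>C\<in>sets M. 0 < measure M C \<and> measure M C < 1 \<and>
      sym_diff (T n ` C) C \<in> null_sets M)" "nontrivial_obs M MO \<Phi>" "k > 0"
    then show "\<exists>oi\<in>\<Phi> ` space M. \<exists>oj\<in>\<Phi> ` space M.
      \<forall>t. 0 < trans_prob M T \<Phi> t k oi oj \<and> trans_prob M T \<Phi> t k oi oj < 1"
      using almost_invariant_set_if_degenerate_trans_prob[of MO \<Phi> k] by blast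
  next
    assume markov: "\<forall>(MO :: 'b measure) \<Phi>. nontrivial_obs M MO \<Phi> \<longrightarrow>
      (\<forall>k>0. \<exists>oi\<in>\<Phi> ` space M. \<exists>oj\<in>\<Phi> ` space M.
        \<forall>t. 0 < trans_prob M T \<Phi> t k oi oj \<and> trans_prob M T \<Phi> t k oi oj < 1)"
    assume "\<exists>n>0. \<exists>C\<in>sets M. 0 < measure M C \<and> measure M C < 1 \<and>
      sym_diff (T n ` C) C \<in> null_sets M"
    then obtain n C where n: "n > 0" and C: "C \<in> sets M" "0 < measure M C" "measure M C < 1"
      and invariant: "sym_diff (T n ` C) C \<in> null_sets M"
      by blast
    let ?\<Phi> = "\<lambda>m. if m \<in> C then x else y"
    note obs = nontrivial_obs_indicator[OF xy C]
    obtain oi oj where "oi \<in> {x, y}" "oj \<in> {x, y}"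
      and "0 < trans_prob M T ?\<Phi> 0 n oi oj" "trans_prob M T ?\<Phi> 0 n oi oj < 1"
      using markov[rule_format, OF obs(1) n] unfolding obs(2) by blast
    then show False
      using trans_prob_indicator_almost_invariant[OF xy C invariant, of oi oj 0] by auto
  qed
qed

end
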